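(* Let $D$ be a strongly connected digraph with $\chi(D)\geq 4$. Then $D$ contains a subdivision of $B(2,1;1)$.
   Context: Digraphs are finite, without loops or parallel arcs (opposite arcs allowed). $\chi(D)$ is the chromatic number of the underlying undirected graph of $D$. A digraph is strongly connected if every vertex can reach every other vertex by a directed path. For positive integers $k_1,k_2,k_3$, a digraph $D$ contains a subdivision of $B(k_1,k_2;k_3)$ if there exist distinct vertices $x,y$ of $D$ and three pairwise internally vertex-disjoint directed paths in $D$: two from $x$ to $y$, of lengths (numbers of arcs) at least $k_1$ and at least $k_2$ respectively, and one from $y$ to $x$ of length at least $k_3$. *)

theory Defs
  imports Main
begin

text \<open>A digraph is given by a vertex set V and an arc relation A: finite, loopless,
  arcs between vertices of V. Parallel arcs cannot occur (A is a set); opposite arcs allowed.\<close>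

definition digraph :: "'a set \<Rightarrow> ('a \<times> 'a) set \<Rightarrow> bool" where
  "digraph V A \<longleftrightarrow> finite V \<and> A \<subseteq> V \<times> V \<and> (\<forall>v. (v, v) \<notin> A)"

definition strongly_connected :: "'a set \<Rightarrow> ('a \<times> 'a) set \<Rightarrow> bool" where
  "strongly_connected V A \<longleftrightarrow> (\<forall>u\<in>V. \<forall>v\<in>V. (u, v) \<in> A\<^sup>*)"

definition proper_colouring :: "'a set \<Rightarrow> ('a \<times> 'a) set \<Rightarrow> nat \<Rightarrow> ('a \<Rightarrow> nat) \<Rightarrow> bool" where
  "proper_colouring V A k c \<longleftrightarrow> (\<forall>v\<in>V. c v < k) \<and> (\<forall>(u, v)\<in>A. c u \<noteq> c v)"

definition chromatic_number :: "'a set \<Rightarrow> ('a \<times> 'a) set \<Rightarrow> nat" where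
  "chromatic_number V A = (LEAST k. \<exists>c. proper_colouring V A k c)"

definition dpath :: "('a \<times> 'a) set \<Rightarrow> 'a list \<Rightarrow> 'a \<Rightarrow> 'a \<Rightarrow> bool" where
  "dpath A p x y \<longleftrightarrow> length p \<ge> 1 \<and> distinct p \<and> hd p = x \<and> last p = y \<and>
     (\<forall>i. Suc i < length p \<longrightarrow> (p ! i, p ! Suc i) \<in> A)"

definition path_len :: "'a list \<Rightarrow> nat" where
  "path_len p = length p - 1"

definition inner :: "'a list \<Rightarrow> 'a set" where
  "inner p = set (butlast (tl p))"

definition contains_B_subdivision :: "'a set \<Rightarrow> ('a \<times> 'a) set \<Rightarrow> nat \<Rightarrow> nat \<Rightarrow> nat \<Rightarrow> bool" where
  "contains_B_subdivision V A k1 k2 k3 \<longleftrightarrow>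
    (\<exists>x\<in>V. \<exists>y\<in>V. \<exists>P1 P2 P3. x \<noteq> y \<and>
       dpath A P1 x y \<and> dpath A P2 x y \<and> dpath A P3 y x \<and>
       path_len P1 \<ge> k1 \<and> path_len P2 \<ge> k2 \<and> path_len P3 \<ge> k3 \<and>
       set P1 \<inter> set P2 = {x, y} \<and> set P1 \<inter> set P3 = {x, y} \<and> set P2 \<inter> set P3 = {x, y})"

end

theory Submission
  imports Defs
begin

text \<open>Assume D contains no subdivision of B(2,1;1); we show that D is 3-colourable.
  Take a largest vertex set S that induces a strongly connected subdigraph with a proper
  3-colouring. If S is not everything, strong connectivity yields an ear: a path leaving S at u and
  re-entering it at w, with all inner vertices outside S. If w \<noteq> u, then paths inside S from w to
  some vertex y and between u and y, chosen to meet only where they must, form a B(2,1;1) together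
  with the ear. Hence the ear is a cycle through u, and by the same argument no arc joins its other
  vertices to S - {u}. Every arc between two vertices of the cycle is a cycle arc, since any other
  arc together with the two segments of the cycle between its ends is a B(2,1;1). Colouring the new
  vertices alternately with the two colours different from that of u extends the colouring to a
  larger set, a contradiction.\<close>

section \<open>Directed paths and reachability\<close>

lemma dpath_Nil [simp]: "\<not> dpath A [] x y"
  by (simp add: dpath_def)

lemma dpath_singleton_iff [simp]: "dpath A [v] x y \<longleftrightarrow> x = v \<and> y = v"
  by (auto simp: dpath_def)

lemma dpath_Cons_Cons_iff:
  "dpath A (v # w # p) x y \<longleftrightarrow> x = v \<and> (v, w) \<in> A \<and> v \<notin> set (w # p) \<and> dpath A (w # p) w y"
proof -
  have "(\<forall>i. Suc i < length (v # w # p) \<longrightarrow> ((v # w # p) ! i, (v # w # p) ! Suc i) \<in> A) \<longleftrightarrow>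
    (\<forall>i < Suc (length p). ((v # w # p) ! i, (v # w # p) ! Suc i) \<in> A)"
    by auto
  also have "\<dots> \<longleftrightarrow> (v, w) \<in> A \<and> (\<forall>i. Suc i < length (w # p) \<longrightarrow> ((w # p) ! i, (w # p) ! Suc i) \<in> A)"
    unfolding All_less_Suc2 by auto
  finally show ?thesis unfolding dpath_def by auto
qed

lemma dpath_hd: "dpath A p x y \<Longrightarrow> p = x # tl p"
  by (cases p) (auto simp: dpath_def)

lemma dpath_ends_in_set: "dpath A p x y \<Longrightarrow> x \<in> set p \<and> y \<in> set p"
  by (cases p) (auto simp: dpath_def)

lemma dpath_distinct_ends:
  assumes "dpath A p x y" "x \<noteq> y"
  shows "x \<in> Domain A \<and> 1 \<le> path_len p"
proof -
  obtain w r where "p = x # w # r"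
    using assms dpath_hd[OF assms(1)] by (metis dpath_singleton_iff list.exhaust)
  then show ?thesis using assms(1) by (auto simp: dpath_Cons_Cons_iff path_len_def)
qed

lemma dpath_set_conv_inner:
  assumes "dpath A p x y" "x \<noteq> y"
  shows "set p = {x, y} \<union> inner p"
proof -
  obtain r where r: "p = x # r" "r \<noteq> []" "last r = y"
    using assms dpath_hd[OF assms(1)] by (metis dpath_def dpath_singleton_iff last_ConsR)
  then have "r = butlast r @ [y]" by (metis append_butlast_last_id)
  then show ?thesis unfolding inner_def r(1) by (metis Un_insert_left butlast_snoc list.sel(3)
      list.simps(15) set_append sup_bot.left_neutral sup_commute insert_commute empty_set)
qed

lemma dpath_Cons:
  assumes "dpath A p y z" "(x, y) \<in> A" "x \<notin> set p"
  shows "dpath A (x # p) x z"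
  using assms dpath_hd[OF assms(1)] dpath_Cons_Cons_iff by metis

lemma dpath_snoc:
  assumes "dpath A p x y" "(y, z) \<in> A" "z \<notin> set p"
  shows "dpath A (p @ [z]) x z"
  using assms
proof (induction p arbitrary: x)
  case (Cons v p)
  show ?case
  proof (cases "p = []")
    case True
    with Cons.prems show ?thesis by (auto simp: dpath_Cons_Cons_iff)
  next
    case False
    then obtain w p' where "p = w # p'" by (cases p) auto
    with Cons.prems Cons.IH[of w] show ?thesis by (auto simp: dpath_Cons_Cons_iff)
  qed
qed simp

lemma dpath_split:
  assumes "dpath A (p @ v # q) x y"
  shows "dpath A (p @ [v]) x v \<and> dpath A (v # q) v y"
  using assms
proof (induction p arbitrary: x)
  case Nil
  then have "x = v" by (simp add: dpath_def)
  with Nil show ?case by simp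
next
  case (Cons a p)
  obtain w r where wr: "p @ v # q = w # r" by (cases "p @ v # q") auto
  have "x = a" "(a, w) \<in> A" "a \<notin> set (w # r)" "dpath A (w # r) w y"
    using Cons.prems unfolding wr[symmetric] by (auto simp: dpath_Cons_Cons_iff wr)
  moreover have "a \<notin> set (p @ [v])" using calculation(3) unfolding wr[symmetric] by auto
  ultimately show ?case using Cons.IH[of w] wr by (auto intro: dpath_Cons)
qed

lemma dpath_append:
  assumes "dpath A p x y" "dpath A q y z" "set p \<inter> set q = {y}"
  shows "dpath A (p @ tl q) x z"
  using assms
proof (induction p arbitrary: x)
  case (Cons a p)
  show ?case
  proof (cases "p = []")
    case True
    then show ?thesis using Cons.prems dpath_hd[of A q y z] by auto
  next
    case False
    then obtain w r where "p = w # r" by (cases p) auto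
    then have p: "x = a" "(a, w) \<in> A" "a \<notin> set p" "dpath A p w y"
      using Cons.prems(1) by (auto simp: dpath_Cons_Cons_iff)
    have "y \<in> set p" using p(4) dpath_ends_in_set by metis
    then have "a \<notin> set q" using p(3) Cons.prems(3) by auto
    then have "a \<notin> set (tl q)" by (cases q) auto
    moreover have "dpath A (p @ tl q) w z"
      using Cons.IH[OF p(4) Cons.prems(2)] Cons.prems(3) \<open>y \<in> set p\<close> by auto
    ultimately show ?thesis using p by (auto intro: dpath_Cons)
  qed
qed simp

lemma dpath_mono: "dpath R p x y \<Longrightarrow> R \<subseteq> R' \<Longrightarrow> dpath R' p x y"
  unfolding dpath_def by blast

lemma dpath_subset:
  assumes "dpath R p x y" "R \<subseteq> T \<times> T" "x \<in> T"
  shows "set p \<subseteq> T"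
  using assms
proof (induction p arbitrary: x)
  case (Cons a p)
  then show ?case by (cases p) (auto simp: dpath_Cons_Cons_iff)
qed simp

lemma dpath_reaches:
  assumes "dpath R p x y" "v \<in> set p"
  shows "(x, v) \<in> (R \<inter> set p \<times> set p)\<^sup>*"
  using assms
proof (induction p arbitrary: x)
  case (Cons a p)
  show ?case
  proof (cases "v = a")
    case True
    then show ?thesis using Cons.prems(1) by (simp add: dpath_def)
  next
    case False
    then have "v \<in> set p" using Cons.prems(2) by simp
    then obtain w r where "p = w # r" by (cases p) auto
    then have "x = a" "(a, w) \<in> R" "dpath R p w y"
      using Cons.prems(1) by (auto simp: dpath_Cons_Cons_iff)
    have "R \<inter> set p \<times> set p \<subseteq> R \<inter> set (a # p) \<times> set (a # p)" by auto
    then have "(w, v) \<in> (R \<inter> set (a # p) \<times> set (a # p))\<^sup>*"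
      using Cons.IH[OF \<open>dpath R p w y\<close> \<open>v \<in> set p\<close>] rtrancl_mono by blast
    moreover have "(a, w) \<in> R \<inter> set (a # p) \<times> set (a # p)" using \<open>(a, w) \<in> R\<close> \<open>p = w # r\<close> by simp
    ultimately show ?thesis using \<open>x = a\<close> by (simp add: converse_rtrancl_into_rtrancl)
  qed
qed simp

lemma rtrancl_imp_dpath:
  assumes "(x, y) \<in> R\<^sup>*"
  shows "\<exists>p. dpath R p x y"
  using assms
proof (induction rule: converse_rtrancl_induct)
  case base
  show ?case by (rule exI[of _ "[y]"]) simp
next
  case (step x z)
  then obtain p where p: "dpath R p z y" by blast
  show ?case
  proof (cases "x \<in> set p")
    case True
    then obtain p1 p2 where "p = p1 @ x # p2" by (meson split_list)
    then show ?thesis using p dpath_split by metis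
  next
    case False
    then show ?thesis using dpath_Cons[OF p step(1)] by blast
  qed
qed

lemma dpath_first_hit:
  assumes "(u, w) \<in> R\<^sup>*" "w \<in> X"
  shows "\<exists>p w'. dpath R (p @ [w']) u w' \<and> w' \<in> X \<and> set p \<inter> X = {}"
proof -
  obtain q where q: "dpath R q u w" using rtrancl_imp_dpath[OF assms(1)] by blast
  have "w \<in> set q" using q dpath_ends_in_set by metis
  then obtain w' r where split: "dropWhile (\<lambda>v. v \<notin> X) q = w' # r" and "w' \<in> X"
    using assms(2) by (metis (mono_tags, lifting) dropWhile_eq_Nil_conv hd_dropWhile list.exhaust_sel)
  moreover have "q = takeWhile (\<lambda>v. v \<notin> X) q @ w' # r"
    using split takeWhile_dropWhile_id by metis
  ultimately show ?thesis
    using dpath_split[of R _ w' r u w] q by (metis (lifting) disjoint_iff set_takeWhileD)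
qed

lemma strongly_connected_Un:
  assumes "strongly_connected S (A \<inter> S \<times> S)" "strongly_connected T (A \<inter> T \<times> T)" "v \<in> S \<inter> T"
  shows "strongly_connected (S \<union> T) (A \<inter> (S \<union> T) \<times> (S \<union> T))"
proof -
  let ?R = "A \<inter> (S \<union> T) \<times> (S \<union> T)"
  have "(A \<inter> S \<times> S)\<^sup>* \<subseteq> ?R\<^sup>*" "(A \<inter> T \<times> T)\<^sup>* \<subseteq> ?R\<^sup>*" by (auto intro!: rtrancl_mono)
  then have "(x, v) \<in> ?R\<^sup>* \<and> (v, x) \<in> ?R\<^sup>*" if "x \<in> S \<union> T" for x
    using assms that unfolding strongly_connected_def by blast
  then show ?thesis unfolding strongly_connected_def by (meson rtrancl_trans)
qed

lemma strongly_connected_meeting_paths: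
  assumes T: "strongly_connected T R" and uw: "u \<in> T" "w \<in> T" "u \<noteq> w"
  shows "\<exists>y Q P2 P3. y \<noteq> u \<and> dpath R Q w y \<and> dpath R P2 u y \<and> dpath R P3 y u \<and>
    set Q \<inter> set P2 = {y} \<and> set Q \<inter> set P3 = {y} \<and> set P2 \<inter> set P3 = {u, y}"
proof -
  obtain S where S: "dpath R S w u"
    using rtrancl_imp_dpath T uw unfolding strongly_connected_def by metis
  obtain p y where p: "dpath R (p @ [y]) u y" "y \<in> set S - {u}" "set p \<inter> (set S - {u}) = {}"
    using dpath_first_hit[of u w R "set S - {u}"] T uw dpath_ends_in_set[OF S]
    unfolding strongly_connected_def by blast
  then obtain S1 S2 where S12: "S = S1 @ y # S2" by (meson DiffD1 split_list)
  have "distinct S" "last S = u" using S by (simp_all add: dpath_def)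
  then have dS: "distinct (S1 @ y # S2)" and "u \<in> set S2"
    using p(2) unfolding S12 by (auto split: if_splits)
  then have "u \<notin> set S1" by auto
  have "hd (p @ [y]) = u" "distinct (p @ [y])" using p(1) by (simp_all add: dpath_def)
  then have "u \<in> set p" "y \<notin> set p" using p(2) by (cases p; auto)+
  moreover have "dpath R (S1 @ [y]) w y" "dpath R (y # S2) y u"
    using dpath_split[OF S[unfolded S12]] by blast+
  moreover have "set (S1 @ [y]) \<inter> set (p @ [y]) = {y}" "set (S1 @ [y]) \<inter> set (y # S2) = {y}"
    "set (p @ [y]) \<inter> set (y # S2) = {u, y}"
    using calculation(1,2) p(3) dS \<open>u \<in> set S2\<close> \<open>u \<notin> set S1\<close> unfolding S12 by auto
  ultimately show ?thesis using p(1,2) by blast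
qed

section \<open>Directed cycles\<close>

definition dcycle :: "('a \<times> 'a) set \<Rightarrow> 'a list \<Rightarrow> bool" where
  "dcycle A Q \<longleftrightarrow> 2 \<le> length Q \<and> distinct Q \<and> (\<forall>i < length Q. (Q ! i, Q ! (Suc i mod length Q)) \<in> A)"

lemma dcycle_conv_dpath:
  "dcycle A Q \<longleftrightarrow> 2 \<le> length Q \<and> dpath A Q (hd Q) (last Q) \<and> (last Q, hd Q) \<in> A"
proof -
  have "(\<forall>i < length Q. (Q ! i, Q ! (Suc i mod length Q)) \<in> A) \<longleftrightarrow>
      (\<forall>i. Suc i < length Q \<longrightarrow> (Q ! i, Q ! Suc i) \<in> A) \<and> (last Q, hd Q) \<in> A"
    if L: "2 \<le> length Q"
  proof -
    have "Q \<noteq> []" using L by auto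
    then have ends: "Q ! (length Q - 1) = last Q" "Q ! (Suc (length Q - 1) mod length Q) = hd Q"
      by (simp_all add: last_conv_nth hd_conv_nth)
    have "i < length Q \<longleftrightarrow> Suc i < length Q \<or> i = length Q - 1" for i using L by auto
    then show ?thesis using ends by (metis mod_less)
  qed
  then show ?thesis unfolding dcycle_def dpath_def by auto
qed

lemma dcycle_rotate:
  assumes "dcycle A Q"
  shows "dcycle A (rotate n Q)"
proof -
  let ?L = "length Q"
  have L: "2 \<le> ?L" using assms unfolding dcycle_def by auto
  have "(rotate n Q ! i, rotate n Q ! (Suc i mod ?L)) \<in> A" if i: "i < ?L" for i
  proof -
    have "rotate n Q ! i = Q ! ((n + i) mod ?L)" using i by (simp add: nth_rotate)
    moreover have "rotate n Q ! (Suc i mod ?L) = Q ! ((n + Suc i mod ?L) mod ?L)"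
      using L by (intro nth_rotate mod_less_divisor) linarith
    moreover have "(n + Suc i mod ?L) mod ?L = Suc ((n + i) mod ?L) mod ?L"
      by (simp add: mod_Suc_eq mod_add_right_eq)
    moreover have "(n + i) mod ?L < ?L" using L by (intro mod_less_divisor) linarith
    ultimately show ?thesis using assms unfolding dcycle_def by metis
  qed
  then show ?thesis using assms unfolding dcycle_def by simp
qed

lemma dcycle_split:
  assumes "dcycle A Q" "0 < m" "m < length Q"
  shows "dpath A (take (Suc m) Q) (Q ! 0) (Q ! m)"
    and "dpath A (drop m Q @ [Q ! 0]) (Q ! m) (Q ! 0)"
    and "set (take (Suc m) Q) \<inter> set (drop m Q @ [Q ! 0]) = {Q ! 0, Q ! m}"
proof -
  have "Q \<noteq> []" using assms(3) by auto
  then have Q: "dpath A Q (Q ! 0) (last Q)" "(last Q, Q ! 0) \<in> A" "distinct Q"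
    using assms(1) unfolding dcycle_conv_dpath by (simp_all add: hd_conv_nth dpath_def)
  have split: "Q = take m Q @ Q ! m # drop (Suc m) Q" using assms(3) by (simp add: id_take_nth_drop)
  have take: "take (Suc m) Q = take m Q @ [Q ! m]" and drop: "drop m Q = Q ! m # drop (Suc m) Q"
    using assms(3) by (simp_all add: take_Suc_conv_app_nth Cons_nth_drop_Suc)
  have Q0: "Q ! 0 \<in> set (take m Q)" using assms(2,3) nth_mem[of 0 "take m Q"] by simp
  show "dpath A (take (Suc m) Q) (Q ! 0) (Q ! m)"
    using dpath_split[of A "take m Q" "Q ! m" "drop (Suc m) Q"] split take Q(1) by metis
  have "dpath A (drop m Q) (Q ! m) (last Q)"
    using dpath_split[of A "take m Q" "Q ! m" "drop (Suc m) Q"] split drop Q(1) by metis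
  moreover note Q(2)
  moreover have "Q ! 0 \<notin> set (drop m Q)"
    using Q(3) Q0 by (metis append_take_drop_id disjoint_iff distinct_append)
  ultimately show "dpath A (drop m Q @ [Q ! 0]) (Q ! m) (Q ! 0)"
    by (rule dpath_snoc)
  show "set (take (Suc m) Q) \<inter> set (drop m Q @ [Q ! 0]) = {Q ! 0, Q ! m}"
  proof -
    have "distinct (take m Q @ Q ! m # drop (Suc m) Q)" using split Q(3) by metis
    then show ?thesis using Q0 unfolding take drop by auto
  qed
qed

lemma dcycle_strongly_connected:
  assumes "dcycle A Q"
  shows "strongly_connected (set Q) (A \<inter> set Q \<times> set Q)"
  unfolding strongly_connected_def
proof (intro ballI)
  fix x y assume "x \<in> set Q" "y \<in> set Q"
  then obtain i where i: "i < length Q" "Q ! i = x" by (auto simp: in_set_conv_nth)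
  let ?Q = "rotate i Q"
  have "dpath A ?Q (hd ?Q) (last ?Q)" using dcycle_rotate[OF assms] unfolding dcycle_conv_dpath by blast
  moreover have "hd ?Q = x" using hd_rotate_conv_nth[of Q i] i by (cases Q) auto
  ultimately show "(x, y) \<in> (A \<inter> set Q \<times> set Q)\<^sup>*"
    using dpath_reaches \<open>y \<in> set Q\<close> by fastforce
qed

section \<open>Configurations forcing a subdivision of B(2,1;1)\<close>

lemma contains_B_subdivisionI:
  assumes "A \<subseteq> V \<times> V" "x \<noteq> y"
    and "dpath A P1 x y" "dpath A P2 x y" "dpath A P3 y x" "2 \<le> path_len P1"
    and "set P1 \<inter> set P2 = {x, y}" "set P1 \<inter> set P3 = {x, y}" "set P2 \<inter> set P3 = {x, y}"
  shows "contains_B_subdivision V A 2 1 1"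
proof -
  have "x \<in> V" "1 \<le> path_len P2" using dpath_distinct_ends[OF assms(4,2)] assms(1) by auto
  moreover have "y \<in> V" "1 \<le> path_len P3" using dpath_distinct_ends[OF assms(5)] assms(1,2) by auto
  ultimately show ?thesis using assms unfolding contains_B_subdivision_def by blast
qed

lemma dcycle_arc_succ:
  assumes "A \<subseteq> V \<times> V" "\<not> contains_B_subdivision V A 2 1 1"
    and "dcycle A Q" "i < length Q" "j < length Q" "i \<noteq> j" "(Q ! i, Q ! j) \<in> A"
  shows "j = Suc i mod length Q"
proof (rule ccontr)
  assume not_succ: "j \<noteq> Suc i mod length Q"
  let ?L = "length Q" and ?Q = "rotate i Q"
  define m where "m = (if i \<le> j then j - i else j + ?L - i)"
  have m: "0 < m" "m < ?L" "(i + m) mod ?L = j" unfolding m_def using assms(4-6) by auto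
  have Q0: "?Q ! 0 = Q ! i" using nth_rotate[of 0 Q i] assms(4) by (cases Q) auto
  have Qm: "?Q ! m = Q ! j" using nth_rotate[of m Q i] m by simp
  have "m \<noteq> 1" using m(3) not_succ by auto
  have "dcycle A ?Q" "m < length ?Q" using dcycle_rotate[OF assms(3)] m(2) by simp_all
  from dcycle_split[OF this(1) m(1) this(2)]
  have P1: "dpath A (take (Suc m) ?Q) (Q ! i) (Q ! j)"
    and P3: "dpath A (drop m ?Q @ [Q ! i]) (Q ! j) (Q ! i)"
    and P13: "set (take (Suc m) ?Q) \<inter> set (drop m ?Q @ [Q ! i]) = {Q ! i, Q ! j}"
    unfolding Q0 Qm .
  have "Q ! i \<noteq> Q ! j" using assms(3-6) by (simp add: dcycle_def nth_eq_iff_index_eq)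
  then have P2: "dpath A [Q ! i, Q ! j] (Q ! i) (Q ! j)"
    using assms(7) by (simp add: dpath_Cons)
  have "2 \<le> path_len (take (Suc m) ?Q)" using m \<open>m \<noteq> 1\<close> by (simp add: path_len_def)
  then have "contains_B_subdivision V A 2 1 1"
    using contains_B_subdivisionI[OF assms(1) \<open>Q ! i \<noteq> Q ! j\<close> P1 P2 P3 _ _ P13]
      dpath_ends_in_set[OF P1] dpath_ends_in_set[OF P3] by auto
  with assms(2) show False ..
qed

lemma dcycle_Cons_arc_succ:
  assumes dg: "digraph V A" and nB: "\<not> contains_B_subdivision V A 2 1 1"
    and cyc: "dcycle A (u # ps)" and ij: "i < length ps" "j < length ps" "(ps ! i, ps ! j) \<in> A"
  shows "j = Suc i"
proof -
  have AV: "A \<subseteq> V \<times> V" and "i \<noteq> j" using dg ij(3) by (auto simp: digraph_def)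
  then have "Suc j = Suc (Suc i) mod Suc (length ps)"
    using dcycle_arc_succ[OF AV nB cyc, of "Suc i" "Suc j"] ij by simp
  moreover have "Suc (Suc i) < Suc (length ps) \<or> Suc (Suc i) = Suc (length ps)" using ij(1) by linarith
  ultimately show ?thesis by (metis Suc_inject mod_less mod_self nat.distinct(1))
qed

lemma ear_contains_B_subdivision:
  assumes AV: "A \<subseteq> V \<times> V" and T: "strongly_connected T (A \<inter> T \<times> T)"
    and uw: "u \<in> T" "w \<in> T" "u \<noteq> w"
    and P: "dpath A P u w" "2 \<le> path_len P" "inner P \<inter> T = {}"
  shows "contains_B_subdivision V A 2 1 1"
proof -
  obtain y Q P2 P3 where "y \<noteq> u" and paths: "dpath (A \<inter> T \<times> T) Q w y"
      "dpath (A \<inter> T \<times> T) P2 u y" "dpath (A \<inter> T \<times> T) P3 y u"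
    and meet: "set Q \<inter> set P2 = {y}" "set Q \<inter> set P3 = {y}" "set P2 \<inter> set P3 = {u, y}"
    using strongly_connected_meeting_paths[OF T uw] by blast
  have "set P2 \<subseteq> T" using dpath_subset[OF paths(2) _ uw(1)] by blast
  moreover have "y \<in> T" using calculation dpath_ends_in_set[OF paths(2)] by blast
  ultimately have inT: "set Q \<subseteq> T" "set P2 \<subseteq> T" "set P3 \<subseteq> T"
    using dpath_subset[OF paths(1) _ uw(2)] dpath_subset[OF paths(3)] by auto
  have Q: "dpath A Q w y" and P2: "dpath A P2 u y" and P3: "dpath A P3 y u"
    using paths by (meson Int_lower1 dpath_mono)+
  have PT: "set P \<inter> T = {u, w}" using dpath_set_conv_inner[OF P(1) uw(3)] P(3) uw by auto
  have ends: "w \<in> set Q" "u \<in> set P2" "u \<in> set P3" "y \<in> set P2"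
    using dpath_ends_in_set[OF Q] dpath_ends_in_set[OF P2] dpath_ends_in_set[OF P3] by auto
  have "u \<notin> set Q" using meet(2) ends(3) \<open>y \<noteq> u\<close> by auto
  then have "set P \<inter> set Q = {w}" using PT inT(1) ends(1) dpath_ends_in_set[OF P(1)] by auto
  then have P1: "dpath A (P @ tl Q) u y" using dpath_append[OF P(1) Q] by blast
  have P1_sub: "set (P @ tl Q) \<subseteq> set P \<union> set Q" by (cases Q) auto
  have P1_ends: "u \<in> set (P @ tl Q)" "y \<in> set (P @ tl Q)" using dpath_ends_in_set[OF P1] by auto
  have "set P \<inter> set P2 \<subseteq> {u, y}" using PT inT(2) meet(1) ends(1) by blast
  moreover have "set P \<inter> set P3 \<subseteq> {u, y}" using PT inT(3) meet(2) ends(1) by blast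
  ultimately show ?thesis
  proof (intro contains_B_subdivisionI[OF AV \<open>y \<noteq> u\<close>[symmetric] P1 P2 P3])
    show "2 \<le> path_len (P @ tl Q)" using P(2) by (simp add: path_len_def)
  qed (use P1_sub P1_ends meet ends in auto)+
qed

lemma pendant_cycle_attachment:
  assumes AV: "A \<subseteq> V \<times> V" and nB: "\<not> contains_B_subdivision V A 2 1 1"
    and S: "strongly_connected S (A \<inter> S \<times> S)" "u \<in> S"
    and ps: "dpath A (u # ps) u (last ps)" "(last ps, u) \<in> A" "set ps \<inter> S = {}"
    and a: "a \<in> S" "a \<noteq> u" and v: "v \<in> set ps"
  shows "(a, v) \<notin> A \<and> (v, a) \<notin> A"
proof -
  obtain p1 p2 where ps12: "ps = p1 @ v # p2" using v by (meson split_list)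
  have last: "last (v # p2) = last ps" by (simp add: ps12)
  have pre: "dpath A (u # p1 @ [v]) u v" and suf: "dpath A (v # p2) v (last ps)"
    using dpath_split[of A "u # p1" v p2 u "last ps"] ps(1) last unfolding ps12 by auto
  have "a \<notin> set ps" "u \<notin> set ps" using a ps(3) S(2) by auto
  have "(a, v) \<notin> A"
  proof
    assume "(a, v) \<in> A"
    moreover have "dpath A ((v # p2) @ [u]) v u"
      using dpath_snoc[OF suf ps(2)] \<open>u \<notin> set ps\<close> unfolding ps12 by auto
    ultimately have "dpath A (a # (v # p2) @ [u]) a u"
      using \<open>a \<notin> set ps\<close> a(2) by (intro dpath_Cons) (auto simp: ps12)
    moreover have "inner (a # (v # p2) @ [u]) \<inter> S = {}" using ps(3) by (auto simp: inner_def ps12)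
    ultimately show False
      using ear_contains_B_subdivision[OF AV S(1) a(1) S(2) a(2)] nB by (auto simp: path_len_def)
  qed
  moreover have "(v, a) \<notin> A"
  proof
    assume "(v, a) \<in> A"
    then have "dpath A ((u # p1 @ [v]) @ [a]) u a"
      using dpath_snoc[OF pre] \<open>a \<notin> set ps\<close> a(2) unfolding ps12 by auto
    moreover have "inner ((u # p1 @ [v]) @ [a]) \<inter> S = {}" using ps(3) by (auto simp: inner_def ps12 butlast_append)
    ultimately show False
      using ear_contains_B_subdivision[OF AV S(1) S(2) a(1) a(2)[symmetric]] nB by (auto simp: path_len_def)
  qed
  ultimately show ?thesis ..
qed

section \<open>Three-colouring\<close>

lemma Least_nth_distinct:
  assumes "distinct xs" "k < length xs"
  shows "(LEAST i. xs ! i = xs ! k) = k"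
proof (rule Least_equality)
  show "k \<le> i" if "xs ! i = xs ! k" for i
    using assms that nth_eq_iff_index_eq[of xs i k] by (cases "i < k") auto
qed simp

lemma proper_colouring_attach_path:
  assumes c: "proper_colouring T (A \<inter> T \<times> T) 3 c" and u: "u \<in> T"
    and ps: "distinct ps" "set ps \<inter> T = {}"
    and attach: "\<And>a v. a \<in> T - {u} \<Longrightarrow> v \<in> set ps \<Longrightarrow> (a, v) \<notin> A \<and> (v, a) \<notin> A"
    and chords: "\<And>i j. i < length ps \<Longrightarrow> j < length ps \<Longrightarrow> (ps ! i, ps ! j) \<in> A \<Longrightarrow> j = Suc i"
  shows "\<exists>c'. proper_colouring (T \<union> set ps) (A \<inter> (T \<union> set ps) \<times> (T \<union> set ps)) 3 c'"
proof -
  have "c u < 3" using c u by (simp add: proper_colouring_def)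
  then obtain \<alpha> \<beta> :: nat where \<alpha>\<beta>: "\<alpha> < 3" "\<beta> < 3" "\<alpha> \<noteq> c u" "\<beta> \<noteq> c u" "\<alpha> \<noteq> \<beta>"
    by (intro that[of "if c u = 0 then 1 else 0" "if c u = 2 then 1 else 2"]) auto
  let ?col = "\<lambda>k::nat. if even k then \<alpha> else \<beta>"
  define c' where "c' v = (if v \<in> set ps then ?col (LEAST k. ps ! k = v) else c v)" for v
  have c'_ps: "c' (ps ! k) = ?col k" if "k < length ps" for k
    using that Least_nth_distinct[OF ps(1)] by (simp add: c'_def)
  have c'_T: "c' v = c v" if "v \<in> T" for v using that ps(2) by (auto simp: c'_def)
  have col_u: "?col k \<noteq> c u" and col_Suc: "?col k \<noteq> ?col (Suc k)" for k
    using \<alpha>\<beta> by auto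
  have "c' a \<noteq> c' b" if ab: "(a, b) \<in> A" "a \<in> T \<union> set ps" "b \<in> T \<union> set ps" for a b
  proof (cases "a \<in> T"; cases "b \<in> T")
    assume "a \<in> T" "b \<in> T"
    then show ?thesis using c ab(1) c'_T unfolding proper_colouring_def by fastforce
  next
    assume "a \<in> T" "b \<notin> T"
    then obtain k where "k < length ps" "b = ps ! k" using ab(3) by (auto simp: in_set_conv_nth)
    moreover have "a = u" using attach ab \<open>a \<in> T\<close> \<open>b \<notin> T\<close> by blast
    ultimately show ?thesis using c'_ps c'_T col_u u by metis
  next
    assume "a \<notin> T" "b \<in> T"
    then obtain k where "k < length ps" "a = ps ! k" using ab(2) by (auto simp: in_set_conv_nth)
    moreover have "b = u" using attach ab \<open>b \<in> T\<close> \<open>a \<notin> T\<close> by blast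
    ultimately show ?thesis using c'_ps c'_T col_u u by metis
  next
    assume "a \<notin> T" "b \<notin> T"
    then obtain i j where "i < length ps" "a = ps ! i" "j < length ps" "b = ps ! j"
      using ab(2,3) by (auto simp: in_set_conv_nth)
    then show ?thesis using chords ab(1) c'_ps col_Suc by metis
  qed
  moreover have "c' v < 3" if "v \<in> T \<union> set ps" for v
    using c that \<alpha>\<beta> by (auto simp: c'_def proper_colouring_def)
  ultimately show ?thesis unfolding proper_colouring_def by blast
qed

lemma exists_ear:
  assumes "A \<subseteq> V \<times> V" "strongly_connected V A" "S \<subseteq> V" "s \<in> S" "z \<in> V - S"
  shows "\<exists>u\<in>S. \<exists>w\<in>S. \<exists>ps. ps \<noteq> [] \<and> set ps \<inter> S = {} \<and>
           dpath A (u # ps) u (last ps) \<and> (last ps, w) \<in> A"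
proof -
  have "(s, z) \<in> A\<^sup>*" using assms unfolding strongly_connected_def by blast
  moreover have "z \<notin> S" using assms(5) by simp
  ultimately have "\<exists>u t. u \<in> S \<and> t \<notin> S \<and> (u, t) \<in> A"
    by (induction rule: rtrancl_induct) (use assms(4) in auto)
  then obtain u t where ut: "u \<in> S" "t \<notin> S" "(u, t) \<in> A" by blast
  then have "(t, u) \<in> A\<^sup>*" using assms(1-3) unfolding strongly_connected_def by blast
  then obtain ps w where ps: "dpath A (ps @ [w]) t w" "w \<in> S" "set ps \<inter> S = {}"
    using dpath_first_hit ut(1) by metis
  have "ps \<noteq> []" using ps(1,2) ut(2) by (auto simp: dpath_def)
  then have "ps @ [w] = butlast ps @ last ps # [w]" by simp
  with ps(1) have "dpath A ps t (last ps)" "dpath A [last ps, w] (last ps) w"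
    using dpath_split[of A "butlast ps" "last ps" "[w]" t w] \<open>ps \<noteq> []\<close> by auto
  moreover have "u \<notin> set ps" using ps(3) ut(1) by blast
  ultimately show ?thesis
    using ut ps \<open>ps \<noteq> []\<close> dpath_hd[of A ps t] by (metis dpath_Cons dpath_Cons_Cons_iff)
qed

lemma extend_strongly_connected_colourable:
  assumes dg: "digraph V A" and sc: "strongly_connected V A"
    and nB: "\<not> contains_B_subdivision V A 2 1 1"
    and S: "S \<subseteq> V" "s \<in> S" "S \<noteq> V" "strongly_connected S (A \<inter> S \<times> S)"
      "proper_colouring S (A \<inter> S \<times> S) 3 c"
  shows "\<exists>S' c'. S \<subset> S' \<and> S' \<subseteq> V \<and> strongly_connected S' (A \<inter> S' \<times> S') \<and>
      proper_colouring S' (A \<inter> S' \<times> S') 3 c'"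
proof -
  have AV: "A \<subseteq> V \<times> V" using dg by (simp add: digraph_def)
  obtain z where "z \<in> V - S" using S(1,3) by blast
  then obtain u w ps where u: "u \<in> S" and w: "w \<in> S" and ps: "ps \<noteq> []" "set ps \<inter> S = {}"
    "dpath A (u # ps) u (last ps)" "(last ps, w) \<in> A"
    using exists_ear[OF AV sc S(1,2)] by blast
  have "w = u"
  proof (rule ccontr)
    assume "w \<noteq> u"
    then have "dpath A ((u # ps) @ [w]) u w" using dpath_snoc[OF ps(3,4)] w ps(2) by auto
    moreover have "inner ((u # ps) @ [w]) \<inter> S = {}" using ps(2) by (simp add: inner_def)
    moreover have "2 \<le> path_len ((u # ps) @ [w])" using ps(1) by (cases ps) (auto simp: path_len_def)
    ultimately show False
      using ear_contains_B_subdivision[OF AV S(4) u w] \<open>w \<noteq> u\<close> nB by blast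
  qed
  have cyc: "dcycle A (u # ps)" using ps \<open>w = u\<close> by (simp add: dcycle_conv_dpath Suc_le_eq)
  have "distinct ps" using ps(3) by (simp add: dpath_def)
  have chords: "j = Suc i" if "i < length ps" "j < length ps" "(ps ! i, ps ! j) \<in> A" for i j
    using dcycle_Cons_arc_succ[OF dg nB cyc that] .
  have attach: "(a, v) \<notin> A \<and> (v, a) \<notin> A" if "a \<in> S - {u}" "v \<in> set ps" for a v
    using pendant_cycle_attachment[OF AV nB S(4) u ps(3) _ ps(2)] ps(4) \<open>w = u\<close> that by blast
  obtain c' where "proper_colouring (S \<union> set ps) (A \<inter> (S \<union> set ps) \<times> (S \<union> set ps)) 3 c'"
    using proper_colouring_attach_path[OF S(5) u \<open>distinct ps\<close> ps(2) attach chords] by blast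
  moreover have "strongly_connected (S \<union> set ps) (A \<inter> (S \<union> set ps) \<times> (S \<union> set ps))"
    using strongly_connected_Un[OF S(4) dcycle_strongly_connected[OF cyc], of u] u
    by (simp add: insert_absorb)
  moreover have "S \<subset> S \<union> set ps" using ps(1,2) by (cases ps) auto
  moreover have "S \<union> set ps \<subseteq> V" using dpath_subset[OF ps(3) AV] u S(1) by auto
  ultimately show ?thesis by blast
qed

lemma three_colourable_if_no_B_subdivision:
  assumes dg: "digraph V A" and sc: "strongly_connected V A"
    and nB: "\<not> contains_B_subdivision V A 2 1 1"
  shows "\<exists>c. proper_colouring V A 3 c"
proof (cases "V = {}")
  case True
  then show ?thesis using dg by (auto simp: digraph_def proper_colouring_def)
next
  case False
  then obtain v where v: "v \<in> V" by blast
  have AV: "A \<subseteq> V \<times> V" and fin: "finite V" and loop: "\<And>v. (v, v) \<notin> A"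
    using dg by (auto simp: digraph_def)
  define good where "good S \<longleftrightarrow> S \<subseteq> V \<and> S \<noteq> {} \<and> strongly_connected S (A \<inter> S \<times> S) \<and>
      (\<exists>c. proper_colouring S (A \<inter> S \<times> S) 3 c)" for S
  have "A \<inter> {v} \<times> {v} = {}" using loop by auto
  then have "proper_colouring {v} (A \<inter> {v} \<times> {v}) 3 (\<lambda>_. 0)" by (simp add: proper_colouring_def)
  then have "good {v}" using v by (auto simp: good_def strongly_connected_def)
  moreover have "card S < Suc (card V)" if "good S" for S
    using that fin by (simp add: good_def card_mono le_imp_less_Suc)
  ultimately obtain S where S: "good S" and max: "\<And>S'. good S' \<Longrightarrow> card S' \<le> card S"
    using Lattices_Big.ex_has_greatest_nat[of good "{v}" card "Suc (card V)"] by blast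
  obtain s c where Ss: "S \<subseteq> V" "s \<in> S" "strongly_connected S (A \<inter> S \<times> S)"
    and c: "proper_colouring S (A \<inter> S \<times> S) 3 c"
    using S unfolding good_def by blast
  have "S = V"
  proof (rule ccontr)
    assume "S \<noteq> V"
    then obtain S' c' where "S \<subset> S'" "S' \<subseteq> V" "strongly_connected S' (A \<inter> S' \<times> S')"
      "proper_colouring S' (A \<inter> S' \<times> S') 3 c'"
      using extend_strongly_connected_colourable[OF dg sc nB Ss(1,2) _ Ss(3) c] by blast
    then have "good S'" unfolding good_def by blast
    have "card S < card S'"
      using psubset_card_mono[OF finite_subset[OF \<open>S' \<subseteq> V\<close> fin] \<open>S \<subset> S'\<close>] .
    with max[OF \<open>good S'\<close>] show False by simp
  qed
  then show ?thesis using c Int_absorb2[OF AV] by auto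
qed

theorem mainTheorem2:
  fixes V :: "'a set" and A :: "('a \<times> 'a) set"
  assumes "digraph V A"
    and "strongly_connected V A"
    and "chromatic_number V A \<ge> 4"
  shows "contains_B_subdivision V A 2 1 1"
proof (rule ccontr)
  assume "\<not> contains_B_subdivision V A 2 1 1"
  then obtain c where "proper_colouring V A 3 c"
    using three_colourable_if_no_B_subdivision assms(1,2) by blast
  then have "chromatic_number V A \<le> 3" unfolding chromatic_number_def by (intro Least_le) blast
  with assms(3) show False by simp
qed

end
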